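(* Let $p$ be a prime and let $G$ be a finite group with $G=PN$, where $P\in\mathrm{Syl}_p(G)$, $N\trianglelefteq G$ and $\gcd(|P|,|N|)=1$. If $x\in P$, then $|x^G|\leq \nu_p(G)|x^P|$, with equality if and only if $P$ is the unique Sylow $p$-subgroup of $G$ containing $x$.
   Context: $x^G$ (resp. $x^P$) denotes the conjugacy class of $x$ in $G$ (resp. in $P$), $\mathrm{Syl}_p(G)$ the set of Sylow $p$-subgroups of $G$, and $\nu_p(G)=|\mathrm{Syl}_p(G)|$. *)

theory Defs
  imports "HOL-Algebra.Algebra" "HOL-Computational_Algebra.Primes"
begin

definition Syl :: "('a, 'b) monoid_scheme \<Rightarrow> nat \<Rightarrow> 'a set set" where
  "Syl G p = {P. subgroup P G \<and> card P = p ^ multiplicity p (order G)}"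

definition conj_class :: "('a, 'b) monoid_scheme \<Rightarrow> 'a set \<Rightarrow> 'a \<Rightarrow> 'a set" where
  "conj_class G H x = {h \<otimes>\<^bsub>G\<^esub> x \<otimes>\<^bsub>G\<^esub> inv\<^bsub>G\<^esub> h | h. h \<in> H}"

end

theory Submission
  imports Defs
begin

text \<open>Count the pairs (y, Q) with y a conjugate of x and Q a Sylow p-subgroup containing y.
  All Sylow p-subgroups are conjugate, so each contains as many conjugates of x as P does;
  and each conjugate of x lies in as many Sylow p-subgroups as x does. Hence
  |x^G| \<cdot> #{Q. x \<in> Q} = \<nu>_p(G) \<cdot> |x^G \<inter> P|, which gives the inequality, with equality
  iff P is the only Sylow p-subgroup containing x. When G = PN with P \<inter> N = 1, a conjugate
  (an)x(an)\<inverse> \<in> P with a \<in> P, n \<in> N forces nxn\<inverse> \<in> P, so the commutator nxn\<inverse>x\<inverse>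
  lies in P \<inter> N and x^G \<inter> P = x^P.\<close>

lemma card_eq_1_iff_eq_singleton: "a \<in> A \<Longrightarrow> card A = 1 \<longleftrightarrow> A = {a}"
  by (auto simp: card_1_singleton_iff)

section \<open>Conjugation\<close>

definition conjugation :: "('a, 'b) monoid_scheme \<Rightarrow> 'a \<Rightarrow> 'a \<Rightarrow> 'a" where
  "conjugation G g h = g \<otimes>\<^bsub>G\<^esub> h \<otimes>\<^bsub>G\<^esub> inv\<^bsub>G\<^esub> g"

context group
begin

lemma conjugation_closed [simp, intro]:
  "g \<in> carrier G \<Longrightarrow> h \<in> carrier G \<Longrightarrow> conjugation G g h \<in> carrier G"
  by (simp add: conjugation_def)

lemma conjugation_mult:
  assumes "g \<in> carrier G" "g' \<in> carrier G" "h \<in> carrier G"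
  shows "conjugation G (g \<otimes> g') h = conjugation G g (conjugation G g' h)"
  using assms by (simp add: conjugation_def inv_mult_group m_assoc)

lemma conjugation_inv_cancel [simp]:
  assumes "g \<in> carrier G" "h \<in> carrier G"
  shows "conjugation G (inv g) (conjugation G g h) = h"
    and "conjugation G g (conjugation G (inv g) h) = h"
  using assms by (simp_all flip: conjugation_mult) (simp_all add: conjugation_def)

lemma inj_on_conjugation: "g \<in> carrier G \<Longrightarrow> inj_on (conjugation G g) (carrier G)"
  by (metis conjugation_inv_cancel(1) inj_onI)

lemma conj_class_eq_image: "conj_class G H x = (\<lambda>h. conjugation G h x) ` H"
  by (auto simp: conj_class_def conjugation_def)

lemma conj_class_subset_carrier:
  "x \<in> carrier G \<Longrightarrow> conj_class G (carrier G) x \<subseteq> carrier G"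
  by (auto simp: conj_class_eq_image)

lemma conj_class_self: "x \<in> carrier G \<Longrightarrow> x \<in> conj_class G (carrier G) x"
  unfolding conj_class_eq_image by (rule image_eqI[where x = \<one>]) (simp_all add: conjugation_def)

lemma conjugation_image_eq_coset:
  "H \<subseteq> carrier G \<Longrightarrow> g \<in> carrier G \<Longrightarrow> conjugation G g ` H = g <# H #> inv g"
  unfolding conjugation_def l_coset_def r_coset_def by blast

lemma subgroup_conjugation_image:
  assumes "subgroup H G" "g \<in> carrier G"
  shows "subgroup (conjugation G g ` H) G"
  using subgroup_conjugation_is_surj2[OF assms(2,1)]
    conjugation_image_eq_coset[OF subgroup.subset[OF assms(1)] assms(2)]
  by simp

lemma card_conjugation_image:
  assumes "H \<subseteq> carrier G" "g \<in> carrier G"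
  shows "card (conjugation G g ` H) = card H"
  using card_image inj_on_subset[OF inj_on_conjugation[OF assms(2)] assms(1)] .

lemma Syl_subset_carrier: "Q \<in> Syl G p \<Longrightarrow> Q \<subseteq> carrier G"
  unfolding Syl_def by (blast dest: subgroup.subset)

lemma conjugation_image_Syl:
  assumes "g \<in> carrier G" "Q \<in> Syl G p"
  shows "conjugation G g ` Q \<in> Syl G p"
proof -
  have Q: "subgroup Q G" "card Q = p ^ multiplicity p (order G)"
    using assms(2) by (simp_all add: Syl_def)
  then show ?thesis
    using assms(1) subgroup_conjugation_image card_conjugation_image[OF subgroup.subset[OF Q(1)]]
    by (simp add: Syl_def)
qed

lemma conjugation_image_inv_cancel:
  assumes "H \<subseteq> carrier G" "g \<in> carrier G"
  shows "conjugation G g ` conjugation G (inv g) ` H = H"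
proof -
  have "conjugation G g ` conjugation G (inv g) ` H = (\<lambda>h. h) ` H"
    unfolding image_image using assms by (intro image_cong) auto
  then show ?thesis by simp
qed

lemma bij_betw_conjugation_image_Syl:
  assumes "g \<in> carrier G"
  shows "bij_betw ((`) (conjugation G g)) (Syl G p) (Syl G p)"
proof (rule bij_betw_byWitness[where f' = "(`) (conjugation G (inv g))"])
  show "\<forall>Q\<in>Syl G p. conjugation G (inv g) ` conjugation G g ` Q = Q"
    using conjugation_image_inv_cancel[OF Syl_subset_carrier, where g = "inv g"] assms by simp
  show "\<forall>Q\<in>Syl G p. conjugation G g ` conjugation G (inv g) ` Q = Q"
    using conjugation_image_inv_cancel[OF Syl_subset_carrier] assms by simp
  show "(`) (conjugation G g) ` Syl G p \<subseteq> Syl G p"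
    "(`) (conjugation G (inv g)) ` Syl G p \<subseteq> Syl G p"
    using assms conjugation_image_Syl by auto
qed

lemma conjugation_image_conj_class:
  assumes "g \<in> carrier G" "x \<in> carrier G"
  shows "conjugation G g ` conj_class G (carrier G) x = conj_class G (carrier G) x"
proof -
  let ?C = "conj_class G (carrier G) x"
  have invariant: "conjugation G g' ` ?C \<subseteq> ?C" if "g' \<in> carrier G" for g'
    using that assms by (auto simp: conj_class_eq_image conjugation_mult [symmetric])
  have "?C = conjugation G g ` conjugation G (inv g) ` ?C"
    using conj_class_subset_carrier[OF assms(2)] assms by (simp add: conjugation_image_inv_cancel)
  also have "\<dots> \<subseteq> conjugation G g ` ?C"
    using assms by (intro image_mono invariant) simp
  finally show ?thesis
    using invariant[OF assms(1)] by blast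
qed

section \<open>Group actions\<close>

lemma group_actionI:
  assumes extensional: "\<And>g. g \<in> carrier G \<Longrightarrow> \<phi> g \<in> extensional E"
    and closed: "\<And>g x. g \<in> carrier G \<Longrightarrow> x \<in> E \<Longrightarrow> \<phi> g x \<in> E"
    and one: "\<And>x. x \<in> E \<Longrightarrow> \<phi> \<one> x = x"
    and mult: "\<And>g h x. g \<in> carrier G \<Longrightarrow> h \<in> carrier G \<Longrightarrow> x \<in> E \<Longrightarrow>
      \<phi> (g \<otimes> h) x = \<phi> g (\<phi> h x)"
  shows "group_action G E \<phi>"
proof -
  have cancel: "\<phi> g (\<phi> (inv g) x) = x" if "g \<in> carrier G" "x \<in> E" for g x
  proof -
    have "\<phi> (g \<otimes> inv g) x = \<phi> g (\<phi> (inv g) x)"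
      using that by (intro mult) auto
    then show ?thesis
      using that by (simp add: one)
  qed
  have Bij: "\<phi> g \<in> Bij E" if g: "g \<in> carrier G" for g
  proof -
    have "bij_betw (\<phi> g) E E"
    proof (rule bij_betw_byWitness[where f' = "\<phi> (inv g)"])
      show "\<forall>x\<in>E. \<phi> (inv g) (\<phi> g x) = x"
        using cancel[of "inv g"] g by simp
      show "\<forall>x\<in>E. \<phi> g (\<phi> (inv g) x) = x"
        using cancel g by simp
      show "\<phi> g ` E \<subseteq> E" "\<phi> (inv g) ` E \<subseteq> E"
        using closed g by auto
    qed
    then show ?thesis
      using extensional g by (simp add: Bij_def)
  qed
  have hom: "\<phi> (g \<otimes> h) = \<phi> g \<otimes>\<^bsub>BijGroup E\<^esub> \<phi> h"
    if "g \<in> carrier G" "h \<in> carrier G" for g h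
  proof (rule extensionalityI[OF extensional])
    show "\<phi> g \<otimes>\<^bsub>BijGroup E\<^esub> \<phi> h \<in> extensional E"
      using that Bij by (simp add: BijGroup_def)
    show "\<phi> (g \<otimes> h) x = (\<phi> g \<otimes>\<^bsub>BijGroup E\<^esub> \<phi> h) x" if "x \<in> E" for x
      using that \<open>g \<in> carrier G\<close> \<open>h \<in> carrier G\<close> Bij by (simp add: BijGroup_def compose_def mult)
  qed (use that in simp)
  have "\<phi> \<in> hom G (BijGroup E)"
  proof (rule homI)
    show "\<phi> g \<in> carrier (BijGroup E)" if "g \<in> carrier G" for g
      using Bij[OF that] by (simp add: BijGroup_def)
  qed (rule hom)
  then show ?thesis
    unfolding group_action_def group_hom_def group_hom_axioms_def
    using is_group group_BijGroup by blast
qed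

lemma rcosets_action:
  assumes "subgroup H G"
  shows "group_action G (rcosets H) (\<lambda>g. \<lambda>C\<in>rcosets H. C #> inv g)"
proof (rule group_actionI)
  have sub: "C \<subseteq> carrier G" if "C \<in> rcosets H" for C
    using subgroup.rcosets_carrier[OF assms is_group that] .
  have closed: "C #> g \<in> rcosets H" if "C \<in> rcosets H" "g \<in> carrier G" for C g
  proof -
    obtain a where a: "a \<in> carrier G" "C = H #> a"
      using \<open>C \<in> rcosets H\<close> unfolding RCOSETS_def by blast
    then have "C #> g = H #> (a \<otimes> g)"
      using that subgroup.subset[OF assms] by (simp add: coset_mult_assoc)
    then show ?thesis
      using a that subgroup.subset[OF assms] by (simp add: rcosetsI)
  qed
  then show "(\<lambda>C\<in>rcosets H. C #> inv g) C \<in> rcosets H"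
    if "g \<in> carrier G" "C \<in> rcosets H" for g C
    using that by simp
  show "(\<lambda>C\<in>rcosets H. C #> inv \<one>) C = C" if "C \<in> rcosets H" for C
    using that sub by simp
  show "(\<lambda>C\<in>rcosets H. C #> inv (g \<otimes> h)) C
      = (\<lambda>C\<in>rcosets H. C #> inv g) ((\<lambda>C\<in>rcosets H. C #> inv h) C)"
    if "g \<in> carrier G" "h \<in> carrier G" "C \<in> rcosets H" for g h C
    using that sub closed by (simp add: inv_mult_group coset_mult_assoc)
qed simp

end

lemma (in group_action) fixed_point_of_prime_power_order:
  assumes "Factorial_Ring.prime p" "order G = p ^ n" "finite E" "\<not> p dvd card E"
  shows "\<exists>x\<in>E. \<forall>g\<in>carrier G. \<phi> g x = x"
proof (rule ccontr)
  assume no_fixed_point: "\<not> ?thesis"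
  have "p dvd card orb" if orb: "orb \<in> orbits G E \<phi>" for orb
  proof -
    obtain x where x: "x \<in> E" "orb = orbit G \<phi> x"
      using orb unfolding orbits_def by blast
    have "card orb * card (stabilizer G \<phi> x) = p ^ n"
      using orbit_stabilizer_theorem[OF x(1)] x(2) assms(2) by simp
    then obtain i where i: "card orb = p ^ i"
      using divides_primepow_nat[OF assms(1)] by (metis dvd_triv_left)
    have "i \<noteq> 0"
    proof
      assume "i = 0"
      then have "orb = {x}"
        using i x orbit_refl by (metis card_1_singletonE power_0 singletonD)
      then have "\<forall>g\<in>carrier G. \<phi> g x = x"
        using x(2) by (auto simp: orbit_def)
      then show False
        using no_fixed_point x(1) by blast
    qed
    then show ?thesis
      using i by simp
  qed
  then have "p dvd (\<Sum>orb\<in>orbits G E \<phi>. card orb)"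
    by (simp add: dvd_sum)
  moreover have "(\<Sum>orb\<in>orbits G E \<phi>. card orb) = card E"
    unfolding card_eq_sum by (rule disjoint_sum[OF assms(3)])
  ultimately show False
    using assms(4) by simp
qed

section \<open>Conjugacy of Sylow subgroups\<close>

context group
begin

lemma Syl_index_not_dvd:
  assumes "Factorial_Ring.prime p" "finite (carrier G)" "P \<in> Syl G p"
  shows "\<not> p dvd card (rcosets P)"
proof
  assume "p dvd card (rcosets P)"
  moreover have "card (rcosets P) * card P = order G" "card P = p ^ multiplicity p (order G)"
    using assms(3) lagrange[of P] by (simp_all add: Syl_def)
  ultimately have "p ^ Suc (multiplicity p (order G)) dvd order G"
    by (metis mult_dvd_mono dvd_refl power_Suc)
  moreover have "order G \<noteq> 0" "\<not> is_unit p"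
    using assms(1,2) order_gt_0_iff_finite by (auto simp: not_prime_unit)
  ultimately have "Suc (multiplicity p (order G)) \<le> multiplicity p (order G)"
    using power_dvd_iff_le_multiplicity by blast
  then show False
    by simp
qed

lemma p_subgroup_conjugate_subset_Syl:
  assumes "Factorial_Ring.prime p" "finite (carrier G)" "P \<in> Syl G p" "subgroup Q G" "card Q = p ^ n"
  shows "\<exists>g\<in>carrier G. conjugation G g ` Q \<subseteq> P"
proof -
  have P: "subgroup P G"
    using assms(3) by (simp add: Syl_def)
  have P_sub: "P \<subseteq> carrier G"
    using subgroup.subset[OF P] .
  \<comment> \<open>Q permutes the cosets of P, whose number is prime to p, so it fixes some coset P g;
    then g Q g\<inverse> \<subseteq> P.\<close>
  interpret Q: group_action "G\<lparr>carrier := Q\<rparr>" "rcosets P" "\<lambda>q. \<lambda>C\<in>rcosets P. C #> inv q"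
    using group_action.induced_action[OF rcosets_action[OF P] assms(4)] .
  have order_Q: "order (G\<lparr>carrier := Q\<rparr>) = p ^ n"
    using assms(5) by (simp add: order_def)
  have "finite (rcosets P)"
    using rcosets_subset_PowG[OF P] assms(2) by (meson finite_Pow_iff finite_subset)
  from Q.fixed_point_of_prime_power_order[OF assms(1) order_Q this Syl_index_not_dvd[OF assms(1-3)]]
  obtain C where C: "C \<in> rcosets P" "\<forall>q\<in>Q. (\<lambda>C\<in>rcosets P. C #> inv q) C = C"
    by auto
  then have fixed: "C #> inv q = C" if "q \<in> Q" for q
    using that by simp
  obtain g where g: "g \<in> carrier G" "C = P #> g"
    using C(1) unfolding RCOSETS_def by blast
  have "conjugation G g q \<in> P" if "q \<in> Q" for q
  proof -
    have q: "q \<in> carrier G" "inv q \<in> Q"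
      using that subgroup.subset[OF assms(4)] subgroup.m_inv_closed[OF assms(4)] by auto
    have "P #> g #> q = P #> g"
      using fixed[OF q(2)] q(1) g(2) by simp
    then have "P #> (g \<otimes> q) = P #> g"
      using coset_mult_assoc[OF P_sub g(1) q(1)] by simp
    then have "P #> (g \<otimes> q \<otimes> inv g) = P"
      using coset_mult_inv2[OF _ _ g(1) P_sub] g(1) q(1) by simp
    then show ?thesis
      using coset_join1[OF _ _ P] g(1) q(1) by (simp add: conjugation_def)
  qed
  then show ?thesis
    using g(1) by blast
qed

lemma Syl_conjugate:
  assumes "Factorial_Ring.prime p" "finite (carrier G)" "P \<in> Syl G p" "Q \<in> Syl G p"
  shows "\<exists>g\<in>carrier G. Q = conjugation G g ` P"
proof -
  have P: "subgroup P G" and Q: "subgroup Q G" and "card Q = card P"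
    using assms(3,4) by (simp_all add: Syl_def)
  then obtain g where g: "g \<in> carrier G" "conjugation G g ` Q \<subseteq> P"
    using p_subgroup_conjugate_subset_Syl[OF assms(1-3) Q] assms(4) by (auto simp: Syl_def)
  moreover have "finite P"
    using assms(2) subgroup.subset[OF P] finite_subset by blast
  ultimately have "conjugation G g ` Q = P"
    using card_conjugation_image[OF subgroup.subset[OF Q]] \<open>card Q = card P\<close>
    by (simp add: card_subset_eq)
  then have "Q = conjugation G (inv g) ` P"
    using conjugation_image_inv_cancel[OF subgroup.subset[OF Q], where g = "inv g"] g(1) by simp
  then show ?thesis
    using g(1) by blast
qed

section \<open>Conjugates of an element in the Sylow subgroups\<close>

lemma finite_Syl: "finite (carrier G) \<Longrightarrow> finite (Syl G p)"
  by (rule finite_subset[of _ "Pow (carrier G)"]) (auto dest: Syl_subset_carrier)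

lemma card_conj_class_inter_Syl:
  assumes "Factorial_Ring.prime p" "finite (carrier G)" "P \<in> Syl G p" "Q \<in> Syl G p"
    and "x \<in> carrier G"
  shows "card (conj_class G (carrier G) x \<inter> Q) = card (conj_class G (carrier G) x \<inter> P)"
proof -
  let ?C = "conj_class G (carrier G) x"
  obtain g where g: "g \<in> carrier G" "Q = conjugation G g ` P"
    using Syl_conjugate[OF assms(1-4)] by blast
  have C_sub: "?C \<subseteq> carrier G"
    using conj_class_subset_carrier[OF assms(5)] .
  have P_sub: "P \<subseteq> carrier G"
    using Syl_subset_carrier[OF assms(3)] .
  have "?C \<inter> Q = conjugation G g ` ?C \<inter> conjugation G g ` P"
    using conjugation_image_conj_class[OF g(1) assms(5)] g(2) by simp
  also have "\<dots> = conjugation G g ` (?C \<inter> P)"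
    using inj_on_image_Int[OF inj_on_conjugation[OF g(1)] C_sub P_sub] by simp
  finally show ?thesis
    using card_conjugation_image[OF _ g(1), of "?C \<inter> P"] C_sub by auto
qed

lemma card_Syl_containing_conjugation:
  assumes "g \<in> carrier G" "x \<in> carrier G"
  shows "card {Q \<in> Syl G p. conjugation G g x \<in> Q} = card {Q \<in> Syl G p. x \<in> Q}"
proof -
  have bij: "bij_betw ((`) (conjugation G g)) (Syl G p) (Syl G p)"
    using bij_betw_conjugation_image_Syl[OF assms(1)] .
  have mem: "conjugation G g x \<in> conjugation G g ` Q \<longleftrightarrow> x \<in> Q" if "Q \<in> Syl G p" for Q
    using inj_on_image_mem_iff[OF inj_on_conjugation[OF assms(1)] assms(2) Syl_subset_carrier[OF that]] .
  have image: "(`) (conjugation G g) ` Syl G p = Syl G p"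
    using bij by (simp add: bij_betw_def)
  have eq: "(`) (conjugation G g) ` {Q \<in> Syl G p. x \<in> Q} = {Q \<in> Syl G p. conjugation G g x \<in> Q}"
  proof (intro equalityI subsetI)
    fix Q'
    assume "Q' \<in> (`) (conjugation G g) ` {Q \<in> Syl G p. x \<in> Q}"
    then obtain Q where "Q \<in> Syl G p" "x \<in> Q" "Q' = conjugation G g ` Q"
      by blast
    then show "Q' \<in> {Q \<in> Syl G p. conjugation G g x \<in> Q}"
      using image mem by blast
  next
    fix Q'
    assume Q': "Q' \<in> {Q \<in> Syl G p. conjugation G g x \<in> Q}"
    then obtain Q where "Q \<in> Syl G p" "Q' = conjugation G g ` Q"
      using image by (metis (no_types, lifting) imageE mem_Collect_eq)
    then show "Q' \<in> (`) (conjugation G g) ` {Q \<in> Syl G p. x \<in> Q}"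
      using Q' mem by blast
  qed
  have "bij_betw ((`) (conjugation G g)) {Q \<in> Syl G p. x \<in> Q} {Q \<in> Syl G p. conjugation G g x \<in> Q}"
    by (rule bij_betw_subset[OF bij _ eq]) auto
  from bij_betw_same_card[OF this] show ?thesis
    by (rule sym)
qed

lemma card_conj_class_mult_card_Syl_containing:
  assumes "Factorial_Ring.prime p" "finite (carrier G)" "P \<in> Syl G p" "x \<in> carrier G"
  shows "card (conj_class G (carrier G) x) * card {Q \<in> Syl G p. x \<in> Q}
    = card (Syl G p) * card (conj_class G (carrier G) x \<inter> P)"
proof -
  let ?C = "conj_class G (carrier G) x"
  have finite_C: "finite ?C"
    using finite_subset[OF conj_class_subset_carrier[OF assms(4)] assms(2)] .
  have "card (Syl G p) * card (?C \<inter> P) = (\<Sum>Q\<in>Syl G p. card {y \<in> ?C. y \<in> Q})"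
    using card_conj_class_inter_Syl[OF assms(1-3) _ assms(4)] by (simp add: Int_def)
  also have "\<dots> = (\<Sum>y\<in>?C. card {Q \<in> Syl G p. y \<in> Q})"
    unfolding card_eq_sum by (rule sum.swap_restrict[OF finite_Syl[OF assms(2)] finite_C])
  also have "\<dots> = (\<Sum>y\<in>?C. card {Q \<in> Syl G p. x \<in> Q})"
    using card_Syl_containing_conjugation[OF _ assms(4)] by (intro sum.cong) (auto simp: conj_class_eq_image)
  finally show ?thesis
    by simp
qed

lemma card_conj_class_le_card_Syl_mult:
  assumes "Factorial_Ring.prime p" "finite (carrier G)" "P \<in> Syl G p" "x \<in> P"
  shows "card (conj_class G (carrier G) x) \<le> card (Syl G p) * card (conj_class G (carrier G) x \<inter> P)
    \<and> (card (conj_class G (carrier G) x) = card (Syl G p) * card (conj_class G (carrier G) x \<inter> P)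
         \<longleftrightarrow> {Q \<in> Syl G p. x \<in> Q} = {P})"
proof -
  let ?C = "conj_class G (carrier G) x" and ?S\<^sub>x = "{Q \<in> Syl G p. x \<in> Q}"
  have x: "x \<in> carrier G"
    using Syl_subset_carrier[OF assms(3)] assms(4) by blast
  have "card ?C > 0"
    using conj_class_self[OF x] finite_subset[OF conj_class_subset_carrier[OF x] assms(2)]
      card_gt_0_iff by blast
  have "P \<in> ?S\<^sub>x"
    using assms(3,4) by simp
  have "finite ?S\<^sub>x"
    using finite_Syl[OF assms(2)] by simp
  then have "card ?S\<^sub>x \<ge> 1"
    using card_mono[of ?S\<^sub>x "{P}"] \<open>P \<in> ?S\<^sub>x\<close> by simp
  then have le: "card ?C \<le> card ?C * card ?S\<^sub>x"
    by simp
  have "card ?C = card ?C * card ?S\<^sub>x \<longleftrightarrow> card ?S\<^sub>x = 1"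
    using \<open>card ?C > 0\<close> by auto
  also have "\<dots> \<longleftrightarrow> ?S\<^sub>x = {P}"
    by (rule card_eq_1_iff_eq_singleton[OF \<open>P \<in> ?S\<^sub>x\<close>])
  finally show ?thesis
    using le card_conj_class_mult_card_Syl_containing[OF assms(1-3) x] by simp
qed

section \<open>Sylow subgroups with a normal complement\<close>

lemma card_subgroup_dvd:
  assumes "subgroup H G" "subgroup K G" "H \<subseteq> K"
  shows "card H dvd card K"
proof -
  interpret K: group "G\<lparr>carrier := K\<rparr>"
    using subgroup_imp_group[OF assms(2)] .
  have "card (rcosets\<^bsub>G\<lparr>carrier := K\<rparr>\<^esub> H) * card H = card K"
    using K.lagrange[OF subgroup_incl[OF assms]] by (simp add: order_def)
  then show ?thesis
    by (metis dvd_triv_right)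
qed

lemma subgroups_Int_eq_one_if_coprime:
  assumes "subgroup H G" "subgroup K G" "coprime (card H) (card K)"
  shows "H \<inter> K = {\<one>}"
proof -
  have HK: "subgroup (H \<inter> K) G"
    using subgroups_Inter_pair[OF assms(1,2)] .
  have "card (H \<inter> K) = 1"
    using coprime_common_divisor_nat[OF assms(3)] card_subgroup_dvd[OF HK] assms(1,2) by blast
  moreover have "\<one> \<in> H \<inter> K"
    using subgroup.one_closed[OF HK] .
  ultimately show ?thesis
    by (metis card_1_singletonE singletonD)
qed

lemma conj_class_inter_complemented_subgroup:
  assumes P: "subgroup P G" and N: "N \<lhd> G" and "P <#> N = carrier G" "P \<inter> N = {\<one>}"
    and "x \<in> P"
  shows "conj_class G (carrier G) x \<inter> P = conj_class G P x"
proof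
  have P_sub: "P \<subseteq> carrier G" and N_sub: "N \<subseteq> carrier G"
    using subgroup.subset[OF P] subgroup.subset[OF normal_imp_subgroup[OF N]] .
  have x: "x \<in> carrier G"
    using assms(5) P_sub by blast
  have P_conj: "conjugation G a w \<in> P" if "a \<in> P" "w \<in> P" for a w
    using that P by (simp add: conjugation_def subgroup.m_closed subgroup.m_inv_closed)
  show "conj_class G P x \<subseteq> conj_class G (carrier G) x \<inter> P"
    using P_sub P_conj assms(5) by (auto simp: conj_class_eq_image)
  show "conj_class G (carrier G) x \<inter> P \<subseteq> conj_class G P x"
  proof
    fix y
    assume "y \<in> conj_class G (carrier G) x \<inter> P"
    then obtain g where g: "g \<in> carrier G" "y = conjugation G g x" and "y \<in> P"
      by (auto simp: conj_class_eq_image)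
    obtain a n where a: "a \<in> P" and n: "n \<in> N" and "g = a \<otimes> n"
      using g(1) assms(3) unfolding set_mult_def by blast
    have a_carr: "a \<in> carrier G" and n_carr: "n \<in> carrier G"
      using a n P_sub N_sub by auto
    define w where "w = conjugation G n x"
    have y: "y = conjugation G a w"
      using g \<open>g = a \<otimes> n\<close> a_carr n_carr x by (simp add: w_def conjugation_mult)
    have "w \<in> P"
      using P_conj[OF _ \<open>y \<in> P\<close>, of "inv a"] a P y a_carr n_carr x
      by (simp add: w_def subgroup.m_inv_closed)
    then have "w \<otimes> inv x \<in> P"
      using P assms(5) by (simp add: subgroup.m_closed subgroup.m_inv_closed)
    moreover have "w \<otimes> inv x = n \<otimes> (x \<otimes> inv n \<otimes> inv x)"
      using n_carr x by (simp add: w_def conjugation_def m_assoc)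
    moreover have "n \<otimes> (x \<otimes> inv n \<otimes> inv x) \<in> N"
      using normal.inv_op_closed2[OF N x subgroup.m_inv_closed[OF normal_imp_subgroup[OF N] n]] n
        subgroup.m_closed[OF normal_imp_subgroup[OF N]] by blast
    ultimately have "w \<otimes> inv x = \<one>"
      using assms(4) by auto
    then have "inv (inv x) = w"
      by (rule inv_equality) (use x n_carr in \<open>simp_all add: w_def\<close>)
    then have "w = x"
      using x by simp
    then show "y \<in> conj_class G P x"
      using y a by (auto simp: conj_class_eq_image)
  qed
qed

end

theorem lemma3p1:
  fixes G (structure) and p :: nat and P N :: "'a set" and x :: 'a
  assumes "group G" and "finite (carrier G)" and "Factorial_Ring.prime p"
    and "P \<in> Syl G p" and "N \<lhd> G" and "coprime (card P) (card N)"
    and "P <#> N = carrier G" and "x \<in> P"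
  shows "card (conj_class G (carrier G) x) \<le> card (Syl G p) * card (conj_class G P x)
    \<and> (card (conj_class G (carrier G) x) = card (Syl G p) * card (conj_class G P x)
         \<longleftrightarrow> {Q \<in> Syl G p. x \<in> Q} = {P})"
proof -
  interpret group G by fact
  have P: "subgroup P G"
    using assms(4) by (simp add: Syl_def)
  have "P \<inter> N = {\<one>}"
    using subgroups_Int_eq_one_if_coprime[OF P normal_imp_subgroup[OF assms(5)] assms(6)] .
  then have "conj_class G (carrier G) x \<inter> P = conj_class G P x"
    using conj_class_inter_complemented_subgroup[OF P assms(5,7) _ assms(8)] by simp
  then show ?thesis
    using card_conj_class_le_card_Syl_mult[OF assms(3,2,4,8)] by simp
qed

end
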